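(* Let $n\ge 2$ be an integer and consider $n+1$ pipes $P_0,P_1,\dots,P_n$, where pipes $P_1,\dots,P_n$ join into pipe $P_0$. For $j\in\{0,1,\dots,n\}$ let $p_{j,\ell}(t),p_{j,r}(t),q_{j,\ell}(t),q_{j,r}(t)$ be real-valued differentiable functions of time satisfying the linearized pipe dynamics \[ \dot p_{j,r}=c_j\,(q_{j,r}-q_{j,\ell}),\qquad \dot q_{j,\ell}=b_j\,p_{j,r}+d_j\,p_{j,\ell}+e_j\,q_{j,\ell}, \] together with the junction constraints \[ p_{1,r}=p_{2,r}=\dots=p_{n,r}=p_{0,\ell},\qquad q_{1,r}+q_{2,r}+\dots+q_{n,r}=q_{0,\ell} \] for all $t$. Then for every $k\in\{1,\dots,n\}$ the variable $q_{k,r}$ is expressed in terms of the state variables $q_{j,\ell}$ by \[ \left(\sum_{j=1}^n\prod_{\substack{i=1\\ i\neq j}}^n c_i\right)q_{k,r}=\prod_{\substack{i=1\\ i\neq k}}^n c_i\left(q_{0,\ell}-\sum_{\substack{i=1\\ i\neq k}}^n q_{i,\ell}\right)+\left(\sum_{j=1}^n\prod_{\substack{i=1\\ i\neq j}}^n c_i-\prod_{\substack{i=1\\ i\neq k}}^n c_i\right)q_{k,\ell} \] for all $t$.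
   Context: Model of isothermal one-dimensional gas flow in a pipe $P_j$: $p$ denotes pressure, $q$ mass flow; subscripts $\ell$ and $r$ denote the values at the left end ($x=0$) and right end ($x=L_j$) of the pipe. The coefficients are $c_j=-\frac{R_sT_0z_0}{A_jL_j}$, $b_j=-\frac{A_j}{L_j}$, $d_j=\frac{A_j}{L_j}+\frac{\lambda_j R_sT_0z_0}{2D_jA_j}\frac{q_{ss,j}|q_{ss,j}|}{p_{\ell,ss,j}^2}-\frac{A_jgh_j}{R_sT_0z_0L_j}$, $e_j=-\frac{\lambda_j R_sT_0z_0}{D_jA_j}\frac{|q_{ss,j}|}{p_{\ell,ss,j}}$, where $R_s>0$ (specific gas constant), $T_0>0$ (temperature), $z_0>0$ (compressibility factor), $g$ (gravity) are constants and, for pipe $j$, $A_j>0$ is the cross-sectional area, $L_j>0$ the length, $D_j>0$ the inner diameter, $\lambda_j$ the friction factor, $h_j$ the elevation difference, and $q_{ss,j}>0$, $p_{\ell,ss,j}>0$ nominal (steady-state) mass flow and left pressure. In particular all $c_j<0$. For each pipe, $(p_{j,r},q_{j,\ell})$ are called state variables and $p_{j,\ell},q_{j,r}$ input variables. *)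

theory Defs
  imports Complex_Main
begin

text \<open>Physical constants: Rs (specific gas constant), T0 (temperature), z0 (compressibility),
  g (gravity). Pipe data: A (area), L (length), D (diameter), lam (friction factor),
  h (elevation difference), qss (nominal mass flow), pss (nominal left pressure).\<close>

definition coef_c :: "real \<Rightarrow> real \<Rightarrow> real \<Rightarrow> (nat \<Rightarrow> real) \<Rightarrow> (nat \<Rightarrow> real) \<Rightarrow> nat \<Rightarrow> real" where
  "coef_c Rs T0 z0 A L j = - (Rs * T0 * z0) / (A j * L j)"

definition coef_b :: "(nat \<Rightarrow> real) \<Rightarrow> (nat \<Rightarrow> real) \<Rightarrow> nat \<Rightarrow> real" where
  "coef_b A L j = - A j / L j"

definition coef_d :: "real \<Rightarrow> real \<Rightarrow> real \<Rightarrow> real \<Rightarrow> (nat \<Rightarrow> real) \<Rightarrow> (nat \<Rightarrow> real) \<Rightarrow>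
    (nat \<Rightarrow> real) \<Rightarrow> (nat \<Rightarrow> real) \<Rightarrow> (nat \<Rightarrow> real) \<Rightarrow> (nat \<Rightarrow> real) \<Rightarrow> (nat \<Rightarrow> real) \<Rightarrow> nat \<Rightarrow> real" where
  "coef_d Rs T0 z0 g A L D lam h qss pss j =
     A j / L j + (lam j * Rs * T0 * z0) / (2 * D j * A j) * (qss j * \<bar>qss j\<bar>) / (pss j)^2
     - (A j * g * h j) / (Rs * T0 * z0 * L j)"

definition coef_e :: "real \<Rightarrow> real \<Rightarrow> real \<Rightarrow> (nat \<Rightarrow> real) \<Rightarrow> (nat \<Rightarrow> real) \<Rightarrow>
    (nat \<Rightarrow> real) \<Rightarrow> (nat \<Rightarrow> real) \<Rightarrow> (nat \<Rightarrow> real) \<Rightarrow> nat \<Rightarrow> real" where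
  "coef_e Rs T0 z0 A D lam qss pss j =
     - (lam j * Rs * T0 * z0) / (D j * A j) * \<bar>qss j\<bar> / pss j"

end

theory Submission
  imports Defs
begin

text \<open>The right pressures of pipes 1..n all coincide with the left pressure of pipe 0, so their
  time derivatives coincide: \<open>c j * (q_r j t - q_l j t)\<close> is one common value for all j.
  Multiplying the k-th difference by the products of the other coefficients eliminates this
  value, and the flow balance at the junction identifies the sum of the differences with
  \<open>q_l 0 t - (\<Sum>i. q_l i t)\<close>. Only the pressure dynamics and the junction conditions enter;
  in particular no sign condition on the coefficients is needed.\<close>

lemma prod_remove_mult_swap:
  fixes c x :: "'a \<Rightarrow> 'b::comm_semiring_1"
  assumes "finite I" "j \<in> I" "k \<in> I"
    and "c j * x j = c k * x k"
  shows "(\<Prod>i\<in>I-{j}. c i) * x k = (\<Prod>i\<in>I-{k}. c i) * x j"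
proof (cases "j = k")
  case False
  define Q where "Q = (\<Prod>i\<in>I-{j}-{k}. c i)"
  have "(\<Prod>i\<in>I-{j}. c i) = c k * Q"
    using prod.remove[of "I-{j}" k c] assms(1,3) False unfolding Q_def by simp
  moreover have "(\<Prod>i\<in>I-{k}. c i) = c j * Q"
    using prod.remove[of "I-{k}" j c] assms(1,2) False unfolding Q_def
    by (simp add: Diff_insert2[symmetric] insert_commute)
  ultimately show ?thesis
    using assms(4) by (simp add: ac_simps)
qed simp

lemma sum_prod_remove_mult_eq:
  fixes c x :: "'a \<Rightarrow> 'b::comm_semiring_1"
  assumes "finite I" "k \<in> I"
    and common: "\<And>j. j \<in> I \<Longrightarrow> c j * x j = c k * x k"
  shows "(\<Sum>j\<in>I. \<Prod>i\<in>I-{j}. c i) * x k = (\<Prod>i\<in>I-{k}. c i) * (\<Sum>j\<in>I. x j)"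
proof -
  have "(\<Prod>i\<in>I-{j}. c i) * x k = (\<Prod>i\<in>I-{k}. c i) * x j" if "j \<in> I" for j
    using prod_remove_mult_swap[OF assms(1) that assms(2) common[OF that]] .
  then show ?thesis
    unfolding sum_distrib_left sum_distrib_right by (rule sum.cong[OF refl])
qed

theorem theorem1:
  fixes n :: nat
    and Rs T0 z0 g :: real
    and A L D lam h qss pss :: "nat \<Rightarrow> real"
    and p_l p_r q_l q_r :: "nat \<Rightarrow> real \<Rightarrow> real"
  defines "c \<equiv> coef_c Rs T0 z0 A L"
    and "b \<equiv> coef_b A L"
    and "d \<equiv> coef_d Rs T0 z0 g A L D lam h qss pss"
    and "e \<equiv> coef_e Rs T0 z0 A D lam qss pss"
  assumes n2: "n \<ge> 2"
    and consts_pos: "Rs > 0" "T0 > 0" "z0 > 0"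
    and pipe_pos: "\<forall>j\<le>n. A j > 0 \<and> L j > 0 \<and> D j > 0 \<and> qss j > 0 \<and> pss j > 0"
    and diff_pl: "\<forall>j\<le>n. \<forall>t. p_l j differentiable (at t)"
    and diff_qr: "\<forall>j\<le>n. \<forall>t. q_r j differentiable (at t)"
    and dyn_p: "\<forall>j\<le>n. \<forall>t. (p_r j has_real_derivative c j * (q_r j t - q_l j t)) (at t)"
    and dyn_q: "\<forall>j\<le>n. \<forall>t. (q_l j has_real_derivative
                   b j * p_r j t + d j * p_l j t + e j * q_l j t) (at t)"
    and junc_p: "\<forall>j\<in>{1..n}. \<forall>t. p_r j t = p_l 0 t"
    and junc_q: "\<forall>t. (\<Sum>j=1..n. q_r j t) = q_l 0 t"
  shows "\<forall>k\<in>{1..n}. \<forall>t.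
     (\<Sum>j=1..n. \<Prod>i\<in>{1..n}-{j}. c i) * q_r k t =
       (\<Prod>i\<in>{1..n}-{k}. c i) * (q_l 0 t - (\<Sum>i\<in>{1..n}-{k}. q_l i t))
       + ((\<Sum>j=1..n. \<Prod>i\<in>{1..n}-{j}. c i) - (\<Prod>i\<in>{1..n}-{k}. c i)) * q_l k t"
proof (intro ballI allI)
  fix k t assume k: "k \<in> {1..n}"
  define x where "x j = q_r j t - q_l j t" for j
  have common_flux: "c j * x j = c k * x k" if "j \<in> {1..n}" for j
  proof -
    have same_pressure: "p_r k = p_r j"
      using junc_p that k by auto
    have "(p_r j has_real_derivative c j * x j) (at t)"
      using dyn_p that unfolding x_def by simp
    moreover have "(p_r j has_real_derivative c k * x k) (at t)"
      using dyn_p k same_pressure unfolding x_def by fastforce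
    ultimately show ?thesis
      by (rule DERIV_unique)
  qed
  have balance: "(\<Sum>j=1..n. x j) = q_l 0 t - q_l k t - (\<Sum>i\<in>{1..n}-{k}. q_l i t)"
    using junc_q sum.remove[of "{1..n}" k "\<lambda>i. q_l i t"] k
    unfolding x_def by (simp add: sum_subtractf)
  have "(\<Sum>j=1..n. \<Prod>i\<in>{1..n}-{j}. c i) * x k
      = (\<Prod>i\<in>{1..n}-{k}. c i) * (q_l 0 t - q_l k t - (\<Sum>i\<in>{1..n}-{k}. q_l i t))"
    using sum_prod_remove_mult_eq[of "{1..n}" k c x, OF _ k common_flux] balance by simp
  then show "(\<Sum>j=1..n. \<Prod>i\<in>{1..n}-{j}. c i) * q_r k t =
       (\<Prod>i\<in>{1..n}-{k}. c i) * (q_l 0 t - (\<Sum>i\<in>{1..n}-{k}. q_l i t))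
       + ((\<Sum>j=1..n. \<Prod>i\<in>{1..n}-{j}. c i) - (\<Prod>i\<in>{1..n}-{k}. c i)) * q_l k t"
    unfolding x_def by (simp add: algebra_simps)
qed

end
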